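(* If $\mathfrak b\leq\mathfrak{ss}_{i,o}$, then $\mathfrak{ss}_{i,o}=\mathfrak{ss}_o$. Dually, if $\mathfrak d\geq\mathfrak{ss}_{i,o}^\perp$, then $\mathfrak{ss}_{i,o}^\perp=\mathfrak{ss}_o^\perp$.
   Context: Let $\mathfrak S_{cc}$ be the set of all sequences $\mathbf a=\langle a_i:i\in\omega\rangle$ of rational numbers with $a_i\to0$ such that $\sum_i a_i$ is conditionally convergent (converges to a real number, with the positive terms summing to $+\infty$ and the negative terms to $-\infty$). Let $[\omega]^\omega_\omega$ be the set of infinite coinfinite subsets of $\omega$; for such $X$ with increasing enumeration $\langle i_n\rangle$, $\sum_X\mathbf a$ denotes $\sum_n a_{i_n}$. A series diverges if it does not converge to a real number; it diverges by oscillation if its partial sums do not have a unique accumulation point in $\mathbb R\cup\{+\infty,-\infty\}$ (here $\pm\infty$ counts as an accumulation point when the partial sums are unbounded above, resp. below). $\mathfrak{ss}_{i,o}$ (resp. $\mathfrak{ss}_o$) is the least cardinality of $\mathcal X\subseteq[\omega]^\omega_\omega$ such that every $\mathbf a\in\mathfrak S_{cc}$ has some $X\in\mathcal X$ with $\sum_X\mathbf a$ divergent (resp. divergent by oscillation); $\mathfrak{ss}_{i,o}^\perp$ (resp. $\mathfrak{ss}_o^\perp$) is the least cardinality of $\mathcal A\subseteq\mathfrak S_{cc}$ such that no $X\in[\omega]^\omega_\omega$ makes $\sum_X\mathbf a$ divergent (resp. divergent by oscillation) for all $\mathbf a\in\mathcal A$. $\mathfrak b$, $\mathfrak d$ are the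 bounding and dominating numbers. *)

theory Defs
  imports "HOL-Analysis.Analysis" "HOL-Library.Infinite_Set"
begin

(* Minimal cardinality (as a cardinal = well-order relation, up to ordIso) of a set
   satisfying P: the cardinal |A| of some A with P A such that |A| \<le>o |B| for all B with P B. *)
definition mincard :: "('a set \<Rightarrow> bool) \<Rightarrow> 'a rel" where
  "mincard P = (SOME r. \<exists>A. P A \<and> r = card_of A \<and> (\<forall>B. P B \<longrightarrow> (card_of A, card_of B) \<in> ordLeq))"

definition infcoinf :: "nat set set" where
  "infcoinf = {X. infinite X \<and> infinite (- X)}"

definition Scc :: "(nat \<Rightarrow> rat) set" where
  "Scc = {a. (\<lambda>i. real_of_rat (a i)) \<longlonglongrightarrow> 0
            \<and> summable (\<lambda>i. real_of_rat (a i))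
            \<and> \<not> summable (\<lambda>i. max 0 (real_of_rat (a i)))
            \<and> \<not> summable (\<lambda>i. min 0 (real_of_rat (a i)))}"

definition subseq_terms :: "nat set \<Rightarrow> (nat \<Rightarrow> rat) \<Rightarrow> nat \<Rightarrow> real" where
  "subseq_terms X a = (\<lambda>n. real_of_rat (a (enumerate X n)))"

definition partial_sums :: "(nat \<Rightarrow> real) \<Rightarrow> nat \<Rightarrow> real" where
  "partial_sums f = (\<lambda>n. \<Sum>k<n. f k)"

definition sub_diverges :: "nat set \<Rightarrow> (nat \<Rightarrow> rat) \<Rightarrow> bool" where
  "sub_diverges X a \<longleftrightarrow> \<not> summable (subseq_terms X a)"

definition acc_point :: "(nat \<Rightarrow> real) \<Rightarrow> ereal \<Rightarrow> bool" where
  "acc_point s L \<longleftrightarrow> (\<forall>U. open U \<and> L \<in> U \<longrightarrow> (\<exists>\<^sub>F n in sequentially. ereal (s n) \<in> U))"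

(* divergent by oscillation: partial sums lack a unique accumulation point in [-oo,+oo] *)
definition sub_osc :: "nat set \<Rightarrow> (nat \<Rightarrow> rat) \<Rightarrow> bool" where
  "sub_osc X a \<longleftrightarrow> \<not> (\<exists>!L. acc_point (partial_sums (subseq_terms X a)) L)"

definition ss_io :: "nat set rel" where
  "ss_io = mincard (\<lambda>\<X>. \<X> \<subseteq> infcoinf \<and> (\<forall>a\<in>Scc. \<exists>X\<in>\<X>. sub_diverges X a))"

definition ss_o :: "nat set rel" where
  "ss_o = mincard (\<lambda>\<X>. \<X> \<subseteq> infcoinf \<and> (\<forall>a\<in>Scc. \<exists>X\<in>\<X>. sub_osc X a))"

definition ss_io_perp :: "(nat \<Rightarrow> rat) rel" where
  "ss_io_perp = mincard (\<lambda>\<A>. \<A> \<subseteq> Scc \<and> \<not> (\<exists>X\<in>infcoinf. \<forall>a\<in>\<A>. sub_diverges X a))"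

definition ss_o_perp :: "(nat \<Rightarrow> rat) rel" where
  "ss_o_perp = mincard (\<lambda>\<A>. \<A> \<subseteq> Scc \<and> \<not> (\<exists>X\<in>infcoinf. \<forall>a\<in>\<A>. sub_osc X a))"

definition le_star :: "(nat \<Rightarrow> nat) \<Rightarrow> (nat \<Rightarrow> nat) \<Rightarrow> bool" where
  "le_star f g \<longleftrightarrow> (\<forall>\<^sub>F n in sequentially. f n \<le> g n)"

definition bnum :: "(nat \<Rightarrow> nat) rel" where
  "bnum = mincard (\<lambda>F. \<not> (\<exists>g. \<forall>f\<in>F. le_star f g))"

definition dnum :: "(nat \<Rightarrow> nat) rel" where
  "dnum = mincard (\<lambda>F. \<forall>g. \<exists>f\<in>F. le_star g f)"

end

theory Submission
  imports Defs
begin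

text \<open>Oscillation implies divergence, which gives \<open>ss_io \<le> ss_o\<close> and
  \<open>ss_o_perp \<le> ss_io_perp\<close> outright. For the converse, damp a conditionally convergent
  series to \<open>damped a i = a i / (1 + (\<Sum>j\<le>i. \<bar>a j\<bar>))\<close>, which is still conditionally
  convergent (Dirichlet's test and the Abel--Dini theorem). If the damped series diverges along
  \<open>X\<close>, Dirichlet's test shows that the partial sums of \<open>a\<close> or of \<open>-a\<close> along \<open>X\<close> are
  unbounded above, so there is a \<open>g\<close> such that from any \<open>k\<close> on they gain a prescribed margin
  before time \<open>g k\<close>. Cut \<open>\<omega>\<close> into blocks growing with some \<open>f\<close> not dominated by \<open>g \<circ> g\<close>:
  infinitely many blocks are long compared to \<open>g\<close>, and for any \<open>Z\<close> splitting the set \<open>E\<close> of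
  their left ends, the set that follows \<open>X\<close> on the blocks starting in \<open>Z\<close> and the complement
  of \<open>X\<close> on the others has partial sums infinitely often \<open>\<ge> 1\<close> and infinitely often
  \<open>\<le> -1\<close>. Every set along which the alternating harmonic series spread over \<open>E\<close> diverges
  splits \<open>E\<close>. As the oscillating set is determined by \<open>X\<close>, \<open>f\<close> and \<open>Z\<close>, counting these
  parameters under the hypotheses on \<open>bnum\<close> and \<open>dnum\<close> gives the reverse inequalities.\<close>

unbundle cardinal_syntax

section \<open>Sequences and series\<close>

lemma partial_sums_Suc: "partial_sums f (Suc n) = partial_sums f n + f n"
  by (simp add: partial_sums_def)

lemma sums_iff_partial_sums: "f sums s \<longleftrightarrow> partial_sums f \<longlonglongrightarrow> s"
  by (simp add: sums_def partial_sums_def[abs_def])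

lemma partial_sums_uminus: "partial_sums (- f) N = - partial_sums f N"
  by (simp add: partial_sums_def sum_negf)

lemma partial_sums_diff:
  "k \<le> N \<Longrightarrow> partial_sums f N - partial_sums f k = (\<Sum>i\<in>{k..<N}. f i)"
  using sum_diff_nat_ivl[of 0 k N f] by (simp add: partial_sums_def lessThan_atLeast0)

lemma partial_sums_unbounded:
  fixes f :: "nat \<Rightarrow> real"
  assumes "\<And>i. 0 \<le> f i" and "\<not> summable f"
  shows "\<exists>n. K < (\<Sum>i<n. f i)"
proof (rule ccontr)
  assume "\<nexists>n. K < (\<Sum>i<n. f i)"
  then have "(\<Sum>i\<le>n. f i) \<le> K" for n
    by (metis lessThan_Suc_atMost not_less)
  then show False
    using assms bounded_imp_summable by blast
qed

lemma bounded_partial_sums: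
  fixes f :: "nat \<Rightarrow> real"
  assumes "summable f"
  obtains C where "\<And>n. \<bar>\<Sum>i<n. f i\<bar> \<le> C"
proof -
  have "Bseq (\<lambda>n. \<Sum>i<n. f i)"
    using assms by (simp add: summable_iff_convergent convergent_imp_Bseq)
  then show ?thesis
    using that by (auto simp: Bseq_def)
qed

lemma summable_pos_part_iff_abs:
  fixes f :: "nat \<Rightarrow> real"
  assumes "summable f"
  shows "summable (\<lambda>i. max 0 (f i)) \<longleftrightarrow> summable (\<lambda>i. \<bar>f i\<bar>)"
proof
  assume "summable (\<lambda>i. max 0 (f i))"
  then have "summable (\<lambda>i. 2 * max 0 (f i) - f i)"
    using assms by (intro summable_diff summable_mult)
  moreover have "2 * max 0 (f i) - f i = \<bar>f i\<bar>" for i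
    by auto
  ultimately show "summable (\<lambda>i. \<bar>f i\<bar>)"
    by simp
next
  assume "summable (\<lambda>i. \<bar>f i\<bar>)"
  then have "summable (\<lambda>i. (\<bar>f i\<bar> + f i) / 2)"
    using assms by (intro summable_divide summable_add)
  moreover have "(\<bar>f i\<bar> + f i) / 2 = max 0 (f i)" for i
    by auto
  ultimately show "summable (\<lambda>i. max 0 (f i))"
    by simp
qed

lemma abs_sum_mult_antimono_le:
  fixes b w :: "nat \<Rightarrow> real"
  assumes bounded: "\<And>n. \<bar>\<Sum>k<n. b k\<bar> \<le> M"
    and antimono: "\<And>n. w (Suc n) \<le> w n" and nonneg: "\<And>n. 0 \<le> w n"
    and "m \<le> N"
  shows "\<bar>\<Sum>k\<in>{m..<N}. b k * w k\<bar> \<le> 2 * M * w m"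
proof -
  define B where "B n = (\<Sum>k\<in>{m..<n}. b k)" for n
  have B_bound: "\<bar>B n\<bar> \<le> 2 * M" if "m \<le> n" for n
  proof -
    have "B n = (\<Sum>k<n. b k) - (\<Sum>k<m. b k)"
      unfolding B_def lessThan_atLeast0 using sum_diff_nat_ivl[of 0 m n b] that by simp
    then show ?thesis
      using bounded[of n] bounded[of m] by linarith
  qed
  \<comment> \<open>Abel summation: the error of replacing all weights by \<open>w n\<close> is controlled by the
    total decrease \<open>w m - w n\<close> of the weights.\<close>
  have abel: "\<bar>(\<Sum>k\<in>{m..<n}. b k * w k) - B n * w n\<bar> \<le> 2 * M * (w m - w n)" if "m \<le> n" for n
    using that
  proof (induction n rule: dec_induct)
    case base
    then show ?case by (simp add: B_def)
  next
    case (step n)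
    have "\<bar>B (Suc n) * (w n - w (Suc n))\<bar> = \<bar>B (Suc n)\<bar> * (w n - w (Suc n))"
      using antimono[of n] by (simp add: abs_mult)
    also have "\<dots> \<le> 2 * M * (w n - w (Suc n))"
      using B_bound[of "Suc n"] step(1) antimono[of n] by (intro mult_right_mono) auto
    finally have "\<bar>B (Suc n) * (w n - w (Suc n))\<bar> \<le> 2 * M * (w n - w (Suc n))" .
    moreover have "(\<Sum>k\<in>{m..<Suc n}. b k * w k) - B (Suc n) * w (Suc n)
        = ((\<Sum>k\<in>{m..<n}. b k * w k) - B n * w n) + B (Suc n) * (w n - w (Suc n))"
      using step(1) by (simp add: B_def algebra_simps)
    then have "\<bar>(\<Sum>k\<in>{m..<Suc n}. b k * w k) - B (Suc n) * w (Suc n)\<bar>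
        \<le> \<bar>(\<Sum>k\<in>{m..<n}. b k * w k) - B n * w n\<bar> + \<bar>B (Suc n) * (w n - w (Suc n))\<bar>"
      by (simp only: abs_triangle_ineq)
    moreover have "2 * M * (w m - w n) + 2 * M * (w n - w (Suc n)) = 2 * M * (w m - w (Suc n))"
      by (simp add: algebra_simps)
    ultimately show ?case
      using step(3) by linarith
  qed
  have "\<bar>B N * w N\<bar> \<le> 2 * M * w N"
    using B_bound[OF \<open>m \<le> N\<close>] nonneg[of N] by (simp add: abs_mult mult_right_mono)
  moreover have "2 * M * (w m - w N) + 2 * M * w N = 2 * M * w m"
    by (simp add: algebra_simps)
  ultimately show ?thesis
    using abel[OF \<open>m \<le> N\<close>] abs_triangle_ineq2[of "\<Sum>k\<in>{m..<N}. b k * w k" "B N * w N"]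
    by linarith
qed

lemma summable_Dirichlet:
  fixes b w :: "nat \<Rightarrow> real"
  assumes bounded: "\<And>n. \<bar>\<Sum>k<n. b k\<bar> \<le> M"
    and antimono: "\<And>n. w (Suc n) \<le> w n" and nonneg: "\<And>n. 0 \<le> w n"
    and "w \<longlonglongrightarrow> 0"
  shows "summable (\<lambda>n. b n * w n)"
proof (rule summable_bounded_partials)
  show "(\<lambda>n. 2 * M * w n) \<longlonglongrightarrow> 0"
    using \<open>w \<longlonglongrightarrow> 0\<close> by (rule tendsto_mult_right_zero)
  have "M \<ge> 0"
    using bounded[of 0] by simp
  have "norm (\<Sum>k\<in>{m<..n}. b k * w k) \<le> 2 * M * w m" if "m < n" for m n
  proof -
    have "norm (\<Sum>k\<in>{m<..n}. b k * w k) = \<bar>\<Sum>k\<in>{Suc m..<Suc n}. b k * w k\<bar>"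
      by (simp add: atLeastLessThanSuc_atLeastAtMost atLeastSucAtMost_greaterThanAtMost)
    also have "\<dots> \<le> 2 * M * w (Suc m)"
      using that by (intro abs_sum_mult_antimono_le assms) simp
    also have "\<dots> \<le> 2 * M * w m"
      using \<open>M \<ge> 0\<close> antimono[of m] by (simp add: mult_left_mono)
    finally show ?thesis .
  qed
  then show "\<forall>\<^sub>F m in sequentially. \<forall>k\<ge>m. \<forall>n>k. norm (\<Sum>i\<in>{k<..n}. b i * w i) \<le> 2 * M * w k"
    by simp
qed

lemma not_summable_Abel_Dini:
  fixes d :: "nat \<Rightarrow> real"
  assumes nonneg: "\<And>i. 0 \<le> d i" and not_summable: "\<not> summable d"
  shows "\<not> summable (\<lambda>i. d i / (1 + (\<Sum>j\<le>i. d j)))"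
proof
  assume "summable (\<lambda>i. d i / (1 + (\<Sum>j\<le>i. d j)))"
  then obtain N where N: "\<And>n. norm (\<Sum>i\<in>{N..<n}. d i / (1 + (\<Sum>j\<le>i. d j))) < 1/2"
    unfolding summable_Cauchy by (meson half_gt_zero_iff order.refl zero_less_one)
  define S where "S n = (\<Sum>i<n. d i)" for n
  have S_mono: "S m \<le> S n" if "m \<le> n" for m n
    unfolding S_def using that nonneg by (intro sum_mono2) auto
  obtain n where n: "1 + 2 * S N < S n"
    using partial_sums_unbounded[OF nonneg not_summable] unfolding S_def by blast
  have "0 \<le> S N"
    unfolding S_def using nonneg by (simp add: sum_nonneg)
  then have "N \<le> n"
    using n S_mono[of n N] by linarith
  have "1/2 \<le> (S n - S N) / (1 + S n)"
    using n \<open>0 \<le> S N\<close> by (simp add: field_simps)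
  also have "\<dots> = (\<Sum>i\<in>{N..<n}. d i / (1 + S n))"
    unfolding S_def using sum_diff_nat_ivl[of 0 N n d] \<open>N \<le> n\<close>
    by (simp add: lessThan_atLeast0 sum_divide_distrib)
  also have "\<dots> \<le> (\<Sum>i\<in>{N..<n}. d i / (1 + (\<Sum>j\<le>i. d j)))"
  proof (rule sum_mono)
    fix i
    assume "i \<in> {N..<n}"
    moreover have "(\<Sum>j\<le>i. d j) = S (Suc i)"
      by (simp add: S_def lessThan_Suc_atMost)
    ultimately show "d i / (1 + S n) \<le> d i / (1 + (\<Sum>j\<le>i. d j))"
      using nonneg[of i] S_mono[of "Suc i" n] S_mono[of 0 "Suc i"]
      by (intro divide_left_mono) (auto simp: S_def)
  qed
  also have "\<dots> < 1/2"
    using N[of n] by simp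
  finally show False
    by simp
qed

lemma frequently_sequentially_if_infinite:
  assumes "infinite (S::nat set)" and "\<And>e. e \<in> S \<Longrightarrow> \<exists>N\<ge>e. P N"
  shows "\<exists>\<^sub>F N in sequentially. P N"
  unfolding frequently_sequentially
proof
  fix N0
  obtain e where "e \<in> S" "N0 \<le> e"
    using assms(1) unfolding infinite_nat_iff_unbounded_le by blast
  then show "\<exists>N\<ge>N0. P N"
    using assms(2) le_trans by blast
qed

section \<open>Accumulation points\<close>

lemma acc_point_subseq:
  assumes "strict_mono r" and "(\<lambda>n. ereal (s (r n))) \<longlonglongrightarrow> L"
  shows "acc_point s L"
  unfolding acc_point_def
proof (intro allI impI)
  fix U :: "ereal set" assume "open U \<and> L \<in> U"
  then have "\<forall>\<^sub>F n in sequentially. ereal (s (r n)) \<in> U"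
    using assms(2) topological_tendstoD by blast
  then obtain M where M: "\<And>n. n \<ge> M \<Longrightarrow> ereal (s (r n)) \<in> U"
    unfolding eventually_sequentially by blast
  show "\<exists>\<^sub>F n in sequentially. ereal (s n) \<in> U"
    unfolding frequently_sequentially
  proof
    fix N
    have "N \<le> r (max N M)"
      using seq_suble[OF assms(1)] le_trans max.cobounded1 by blast
    then show "\<exists>n\<ge>N. ereal (s n) \<in> U"
      using M[of "max N M"] by auto
  qed
qed

lemma acc_point_in_closed:
  fixes s :: "nat \<Rightarrow> real"
  assumes "closed C" and "\<exists>\<^sub>F n in sequentially. ereal (s n) \<in> C"
  shows "\<exists>L\<in>C. acc_point s L"
proof -
  have "infinite {n. ereal (s n) \<in> C}"
    using assms(2) frequently_cofinite[of "\<lambda>n. ereal (s n) \<in> C"]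
    by (simp add: cofinite_eq_sequentially)
  then obtain r :: "nat \<Rightarrow> nat" where r: "strict_mono r" "\<And>n. ereal (s (r n)) \<in> C"
    using infinite_enumerate by blast
  define v where "v n = ereal (s (r n))" for n
  obtain q where q: "strict_mono q" "(v \<circ> q) \<longlonglongrightarrow> limsup v"
    using limsup_subseq_lim by blast
  have "limsup v \<in> C"
    by (rule closed_sequentially[OF assms(1) _ q(2)]) (simp add: v_def r(2))
  moreover have "acc_point s (limsup v)"
    using q r(1) strict_mono_o[of r q] by (intro acc_point_subseq[of "r \<circ> q"]) (auto simp: v_def o_def)
  ultimately show ?thesis by blast
qed

lemma not_unique_acc_point:
  fixes s :: "nat \<Rightarrow> real"
  assumes "\<exists>\<^sub>F n in sequentially. 1 \<le> s n" and "\<exists>\<^sub>F n in sequentially. s n \<le> -1"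
  shows "\<not> (\<exists>!L. acc_point s L)"
proof -
  have "\<exists>\<^sub>F n in sequentially. ereal (s n) \<in> {ereal 1..}"
    using assms(1) by (rule frequently_elim1) (simp only: atLeast_iff ereal_less_eq(3))
  then obtain L1 where L1: "L1 \<in> {ereal 1..}" "acc_point s L1"
    using acc_point_in_closed[OF closed_atLeast] by blast
  have "\<exists>\<^sub>F n in sequentially. ereal (s n) \<in> {..ereal (-1)}"
    using assms(2) by (rule frequently_elim1) (simp only: atMost_iff ereal_less_eq(3))
  then obtain L2 where L2: "L2 \<in> {..ereal (-1)}" "acc_point s L2"
    using acc_point_in_closed[OF closed_atMost] by blast
  have "L2 \<le> ereal (-1)" "ereal (-1) < ereal 1" "ereal 1 \<le> L1"
    using L1(1) L2(1) by auto
  then have "L2 < L1"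
    by (meson le_less_trans less_le_trans)
  then show ?thesis
    using L1(2) L2(2) by blast
qed

lemma summable_imp_unique_acc_point:
  assumes "summable f"
  shows "\<exists>!L. acc_point (partial_sums f) L"
proof -
  obtain s where "partial_sums f \<longlonglongrightarrow> s"
    using assms by (auto simp: summable_def sums_iff_partial_sums)
  then have lim: "(\<lambda>n. ereal (partial_sums f n)) \<longlonglongrightarrow> ereal s"
    by simp
  have "L = ereal s" if "acc_point (partial_sums f) L" for L
  proof (rule ccontr)
    assume "L \<noteq> ereal s"
    then obtain U V where UV: "open U" "open V" "L \<in> U" "ereal s \<in> V" "U \<inter> V = {}"
      using separation_t2[of L "ereal s"] by blast
    have "\<forall>\<^sub>F n in sequentially. ereal (partial_sums f n) \<in> V"
      using lim UV(2,4) by (rule topological_tendstoD)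
    moreover have "\<exists>\<^sub>F n in sequentially. ereal (partial_sums f n) \<in> U"
      using that UV(1,3) by (simp add: acc_point_def)
    ultimately have "\<exists>\<^sub>F n in sequentially. ereal (partial_sums f n) \<in> V \<and> ereal (partial_sums f n) \<in> U"
      by (intro frequently_eventually_conj)
    then show False
      using UV(5) frequently_ex by blast
  qed
  moreover have "acc_point (partial_sums f) (ereal s)"
    using acc_point_subseq[OF strict_mono_id] lim by simp
  ultimately show ?thesis by blast
qed

lemma sub_osc_imp_sub_diverges: "sub_osc X a \<Longrightarrow> sub_diverges X a"
  unfolding sub_osc_def sub_diverges_def using summable_imp_unique_acc_point by metis

section \<open>Subseries as masked series\<close>

definition masked :: "nat set \<Rightarrow> (nat \<Rightarrow> rat) \<Rightarrow> nat \<Rightarrow> real" where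
  "masked Y a i = (if i \<in> Y then real_of_rat (a i) else 0)"

lemma card_less_enumerate:
  assumes "infinite (Y::nat set)"
  shows "card {i\<in>Y. i < enumerate Y n} = n"
proof -
  have "{i\<in>Y. i < enumerate Y n} = enumerate Y ` {..<n}"
  proof (intro equalityI subsetI)
    fix i assume "i \<in> {i \<in> Y. i < enumerate Y n}"
    then obtain k where "enumerate Y k = i" "enumerate Y k < enumerate Y n"
      using enumerate_Ex[OF assms] by auto
    then show "i \<in> enumerate Y ` {..<n}"
      using enumerate_mono_iff[OF assms] by auto
  qed (use assms enumerate_in_set enumerate_mono_iff in auto)
  moreover have "inj_on (enumerate Y) {..<n}"
    using inj_enumerate[OF assms] by (rule inj_on_subset) simp
  ultimately show ?thesis by (simp add: card_image)
qed

lemma filterlim_card_less_at_top: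
  assumes "infinite (Y::nat set)"
  shows "filterlim (\<lambda>N. card {i\<in>Y. i < N}) at_top sequentially"
  unfolding filterlim_at_top eventually_sequentially
proof (intro allI exI impI)
  fix n N assume "enumerate Y n \<le> N"
  then have "card {i\<in>Y. i < enumerate Y n} \<le> card {i\<in>Y. i < N}"
    by (intro card_mono) auto
  then show "n \<le> card {i\<in>Y. i < N}"
    using card_less_enumerate[OF assms] by simp
qed

lemma partial_sums_masked:
  assumes "infinite Y"
  shows "partial_sums (masked Y a) N = partial_sums (subseq_terms Y a) (card {i\<in>Y. i < N})"
proof (induction N)
  case 0
  then show ?case by (simp add: partial_sums_def)
next
  case (Suc N)
  show ?case
  proof (cases "N \<in> Y")
    case True
    then obtain k where k: "enumerate Y k = N"
      using enumerate_Ex[OF assms] by blast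
    have "{i\<in>Y. i < Suc N} = insert N {i\<in>Y. i < N}"
      using True by auto
    then have "card {i\<in>Y. i < Suc N} = Suc k"
      using card_less_enumerate[OF assms, of k] k by simp
    then show ?thesis
      using Suc True k card_less_enumerate[OF assms, of k]
      by (simp add: partial_sums_Suc masked_def subseq_terms_def)
  next
    case False
    then have "{i\<in>Y. i < Suc N} = {i\<in>Y. i < N}"
      using less_Suc_eq by auto
    then show ?thesis
      using Suc False by (simp add: partial_sums_Suc masked_def)
  qed
qed

lemma partial_sums_masked_enumerate:
  "infinite Y \<Longrightarrow> partial_sums (masked Y a) (enumerate Y n) = partial_sums (subseq_terms Y a) n"
  using partial_sums_masked card_less_enumerate by simp

lemma sums_subseq_terms_iff:
  assumes "infinite Y"
  shows "subseq_terms Y a sums s \<longleftrightarrow> masked Y a sums s"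
proof
  assume "subseq_terms Y a sums s"
  then have "(\<lambda>N. partial_sums (subseq_terms Y a) (card {i\<in>Y. i < N})) \<longlonglongrightarrow> s"
    unfolding sums_iff_partial_sums
    by (rule filterlim_compose[OF _ filterlim_card_less_at_top[OF assms]])
  moreover have "partial_sums (masked Y a) = (\<lambda>N. partial_sums (subseq_terms Y a) (card {i\<in>Y. i < N}))"
    using partial_sums_masked[OF assms] by blast
  ultimately show "masked Y a sums s"
    by (simp add: sums_iff_partial_sums)
next
  assume "masked Y a sums s"
  then have "(partial_sums (masked Y a) \<circ> enumerate Y) \<longlonglongrightarrow> s"
    unfolding sums_iff_partial_sums
    by (rule LIMSEQ_subseq_LIMSEQ[OF _ strict_mono_enumerate[OF assms]])
  then show "subseq_terms Y a sums s"
    by (simp add: sums_iff_partial_sums o_def partial_sums_masked_enumerate[OF assms])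
qed

lemma summable_subseq_terms_iff:
  "infinite Y \<Longrightarrow> summable (subseq_terms Y a) \<longleftrightarrow> summable (masked Y a)"
  unfolding summable_def using sums_subseq_terms_iff by blast

lemma frequently_subseq_terms:
  assumes "infinite Y" and "\<exists>\<^sub>F N in sequentially. P (partial_sums (masked Y a) N)"
  shows "\<exists>\<^sub>F n in sequentially. P (partial_sums (subseq_terms Y a) n)"
proof -
  have "\<exists>\<^sub>F N in sequentially. P (partial_sums (subseq_terms Y a) (card {i\<in>Y. i < N}))"
    using assms(2) by (simp add: partial_sums_masked[OF assms(1)])
  then show ?thesis
    using filterlim_card_less_at_top[OF assms(1)]
    by (auto simp: filterlim_iff frequently_def)
qed

lemma partial_sums_masked_Compl:
  "partial_sums (masked (- Y) a) N = partial_sums (\<lambda>i. real_of_rat (a i)) N - partial_sums (masked Y a) N"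
  unfolding partial_sums_def sum_subtractf[symmetric] by (rule sum.cong) (auto simp: masked_def)

lemma masked_uminus: "masked Y (- a) = - masked Y a"
  by (auto simp: masked_def fun_eq_iff of_rat_minus)

lemma summable_masked_finite: "finite Y \<Longrightarrow> summable (masked Y a)"
  by (rule summable_finite[of Y]) (auto simp: masked_def)

lemma summable_masked_if_summable_Compl:
  assumes "summable (\<lambda>i. real_of_rat (a i))" and "summable (masked (- Y) a)"
  shows "summable (masked Y a)"
proof -
  have "masked Y a = (\<lambda>i. real_of_rat (a i) - masked (- Y) a i)"
    by (simp add: fun_eq_iff masked_def)
  then show ?thesis
    using assms by (simp add: summable_diff)
qed

lemma oscillating_masked_sums_imp_sub_osc:
  assumes summable: "summable (\<lambda>i. real_of_rat (a i))"
    and up: "\<exists>\<^sub>F N in sequentially. 1 \<le> partial_sums (masked Y a) N"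
    and down: "\<exists>\<^sub>F N in sequentially. partial_sums (masked Y a) N \<le> -1"
  shows "Y \<in> infcoinf \<and> sub_osc Y a"
proof -
  have not_summable: "\<not> summable (masked Y a)"
    using summable_imp_unique_acc_point not_unique_acc_point[OF up down] by metis
  then have "infinite Y"
    using summable_masked_finite by blast
  moreover have "infinite (- Y)"
    using not_summable summable_masked_if_summable_Compl[OF summable] summable_masked_finite
    by metis
  moreover have "sub_osc Y a"
    unfolding sub_osc_def
    by (rule not_unique_acc_point[OF frequently_subseq_terms frequently_subseq_terms])
      (use \<open>infinite Y\<close> up down in auto)
  ultimately show ?thesis by (simp add: infcoinf_def)
qed

definition abs_partial_sums :: "(nat \<Rightarrow> rat) \<Rightarrow> nat \<Rightarrow> real" where
  "abs_partial_sums a N = (\<Sum>i<N. real_of_rat \<bar>a i\<bar>)"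

lemma abs_partial_sums_nonneg: "0 \<le> abs_partial_sums a N"
  unfolding abs_partial_sums_def by (rule sum_nonneg) simp

lemma abs_partial_sums_mono: "k \<le> N \<Longrightarrow> abs_partial_sums a k \<le> abs_partial_sums a N"
  unfolding abs_partial_sums_def by (intro sum_mono2) auto

lemma abs_partial_sums_masked_le: "\<bar>partial_sums (masked Y a) N\<bar> \<le> abs_partial_sums a N"
  unfolding partial_sums_def abs_partial_sums_def
  by (rule order_trans[OF sum_abs]) (intro sum_mono; simp add: masked_def)

lemma partial_sums_masked_diff_cong:
  assumes "\<And>i. k \<le> i \<Longrightarrow> i < N \<Longrightarrow> i \<in> Y \<longleftrightarrow> i \<in> W" and "k \<le> N"
  shows "partial_sums (masked Y a) N - partial_sums (masked Y a) k
       = partial_sums (masked W a) N - partial_sums (masked W a) k"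
  unfolding partial_sums_diff[OF assms(2)] by (rule sum.cong) (auto simp: masked_def assms(1))

section \<open>Conditionally convergent series\<close>

lemma Scc_iff:
  "a \<in> Scc \<longleftrightarrow> summable (\<lambda>i. real_of_rat (a i)) \<and> \<not> summable (\<lambda>i. \<bar>real_of_rat (a i)\<bar>)"
proof (cases "summable (\<lambda>i. real_of_rat (a i))")
  case True
  have "min 0 (real_of_rat (a i)) = - max 0 (- real_of_rat (a i))" for i
    by simp
  then have "summable (\<lambda>i. min 0 (real_of_rat (a i))) \<longleftrightarrow> summable (\<lambda>i. max 0 (- real_of_rat (a i)))"
    using summable_minus_iff[of "\<lambda>i. max 0 (- real_of_rat (a i))"] by simp
  also have "\<dots> \<longleftrightarrow> summable (\<lambda>i. \<bar>real_of_rat (a i)\<bar>)"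
    using summable_pos_part_iff_abs[of "\<lambda>i. - real_of_rat (a i)"] True
    by (simp add: summable_minus_iff)
  finally show ?thesis
    using True summable_pos_part_iff_abs[OF True] summable_LIMSEQ_zero[OF True]
    by (simp add: Scc_def)
qed (simp add: Scc_def)

lemma uminus_Scc: "a \<in> Scc \<Longrightarrow> - a \<in> Scc"
  by (simp add: Scc_iff of_rat_minus summable_minus_iff)

lemma positive_part_sub_diverges:
  assumes "a \<in> Scc"
  shows "{i. 0 < a i} \<in> infcoinf \<and> sub_diverges {i. 0 < a i} a"
proof -
  define Y where "Y = {i. 0 < a i}"
  have "masked Y a = (\<lambda>i. max 0 (real_of_rat (a i)))"
    and "masked (- Y) a = (\<lambda>i. min 0 (real_of_rat (a i)))"
    by (auto simp: fun_eq_iff masked_def Y_def)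
  then have not_summable: "\<not> summable (masked Y a)" "\<not> summable (masked (- Y) a)"
    using assms by (simp_all add: Scc_def)
  then have "infinite Y" "infinite (- Y)"
    using summable_masked_finite by blast+
  with not_summable show ?thesis
    by (simp add: Y_def infcoinf_def sub_diverges_def summable_subseq_terms_iff)
qed

definition spread :: "nat set \<Rightarrow> (nat \<Rightarrow> rat) \<Rightarrow> nat \<Rightarrow> rat" where
  "spread E h i = (if i \<in> E then h (card {j\<in>E. j < i}) else 0)"

lemma sums_spread_iff:
  assumes "infinite E"
  shows "(\<lambda>i. real_of_rat (spread E h i)) sums s \<longleftrightarrow> (\<lambda>k. real_of_rat (h k)) sums s"
proof -
  have "subseq_terms E (spread E h) = (\<lambda>k. real_of_rat (h k))"
    by (auto simp: fun_eq_iff subseq_terms_def spread_def card_less_enumerate[OF assms]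
        enumerate_in_set[OF assms])
  moreover have "masked E (spread E h) = (\<lambda>i. real_of_rat (spread E h i))"
    by (auto simp: fun_eq_iff masked_def spread_def)
  ultimately show ?thesis
    using sums_subseq_terms_iff[OF assms] by metis
qed

lemma summable_spread_iff:
  "infinite E \<Longrightarrow> summable (\<lambda>i. real_of_rat (spread E h i)) \<longleftrightarrow> summable (\<lambda>k. real_of_rat (h k))"
  unfolding summable_def using sums_spread_iff by blast

lemma abs_spread: "\<bar>spread E h i\<bar> = spread E (\<lambda>k. \<bar>h k\<bar>) i"
  by (simp add: spread_def)

definition alt_harmonic :: "nat \<Rightarrow> rat" where
  "alt_harmonic k = (-1) ^ k / of_nat (Suc k)"

lemma summable_alt_harmonic: "summable (\<lambda>k. real_of_rat (alt_harmonic k))"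
proof -
  have "(\<lambda>k. 1 / real (Suc k)) \<longlonglongrightarrow> 0"
    using LIMSEQ_inverse_real_of_nat by (simp add: divide_inverse)
  then have "summable (\<lambda>k. (-1) ^ k * (1 / real (Suc k)))"
    by (rule summable_Leibniz'(1)) (auto intro: frac_le)
  moreover have "(\<lambda>k. real_of_rat (alt_harmonic k)) = (\<lambda>k. (-1) ^ k * (1 / real (Suc k)))"
    by (simp add: fun_eq_iff alt_harmonic_def of_rat_divide of_rat_power of_rat_add)
  ultimately show ?thesis
    by simp
qed

lemma not_summable_abs_alt_harmonic: "\<not> summable (\<lambda>k. real_of_rat \<bar>alt_harmonic k\<bar>)"
proof -
  have "real_of_rat \<bar>alt_harmonic k\<bar> = inverse (real (Suc k))" for k
    by (simp add: alt_harmonic_def abs_mult of_rat_divide of_rat_add inverse_eq_divide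
        flip: abs_of_rat)
  then show ?thesis
    using not_summable_harmonic[where 'a=real] summable_Suc_iff[of "\<lambda>n. inverse (real n)"]
    by simp
qed

lemma spread_alt_harmonic_Scc: "infinite E \<Longrightarrow> spread E alt_harmonic \<in> Scc"
  by (simp add: Scc_iff summable_spread_iff summable_alt_harmonic abs_spread
      not_summable_abs_alt_harmonic)

definition splits :: "nat set \<Rightarrow> nat set \<Rightarrow> bool" where
  "splits Z E \<longleftrightarrow> infinite (Z \<inter> E) \<and> infinite (E - Z)"

lemma masked_spread: "masked Y (spread E h) = masked (Y \<inter> E) (spread E h)"
  by (auto simp: fun_eq_iff masked_def spread_def)

lemma infinite_inter_if_sub_diverges_spread:
  assumes "infinite Z" and "sub_diverges Z (spread E h)"
  shows "infinite (Z \<inter> E)"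
proof
  assume "finite (Z \<inter> E)"
  then have "summable (masked Z (spread E h))"
    unfolding masked_spread[of Z] by (rule summable_masked_finite)
  then show False
    using assms by (simp add: sub_diverges_def summable_subseq_terms_iff)
qed

lemma splits_if_sub_diverges_spread:
  assumes Z: "infinite Z" and h: "summable (\<lambda>k. real_of_rat (h k))"
    and diverges: "sub_diverges Z (spread E h)"
  shows "splits Z E"
proof -
  have "infinite (Z \<inter> E)"
    using Z diverges by (rule infinite_inter_if_sub_diverges_spread)
  moreover have "infinite (E - Z)"
  proof
    assume "finite (E - Z)"
    have "infinite E"
      using \<open>infinite (Z \<inter> E)\<close> finite_Int[of Z E] by blast
    then have "summable (\<lambda>i. real_of_rat (spread E h i))"
      using h by (simp add: summable_spread_iff)
    moreover have "summable (masked (- Z) (spread E h))"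
      unfolding masked_spread[of "- Z"] Int_commute[of "- Z"] Diff_eq[symmetric]
      using \<open>finite (E - Z)\<close> by (rule summable_masked_finite)
    ultimately have "summable (masked Z (spread E h))"
      by (rule summable_masked_if_summable_Compl)
    then show False
      using Z diverges by (simp add: sub_diverges_def summable_subseq_terms_iff)
  qed
  ultimately show ?thesis
    by (simp add: splits_def)
qed

lemma exists_Scc_not_sub_diverges:
  assumes "X \<in> infcoinf"
  shows "\<exists>a\<in>Scc. \<not> sub_diverges X a"
proof -
  have "infinite X" "infinite (- X)"
    using assms by (simp_all add: infcoinf_def)
  then show ?thesis
    using spread_alt_harmonic_Scc infinite_inter_if_sub_diverges_spread[of X "- X"] by auto
qed

definition damping :: "(nat \<Rightarrow> rat) \<Rightarrow> nat \<Rightarrow> real" where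
  "damping a i = 1 / (1 + (\<Sum>j\<le>i. real_of_rat \<bar>a j\<bar>))"

definition damped :: "(nat \<Rightarrow> rat) \<Rightarrow> nat \<Rightarrow> rat" where
  "damped a i = a i / (1 + (\<Sum>j\<le>i. \<bar>a j\<bar>))"

lemma of_rat_damped: "real_of_rat (damped a i) = real_of_rat (a i) * damping a i"
  by (simp add: damped_def damping_def of_rat_divide of_rat_add of_rat_sum)

lemma damping_pos: "0 < damping a i"
  unfolding damping_def by (simp add: add_pos_nonneg sum_nonneg)

lemma damping_antimono: "i \<le> j \<Longrightarrow> damping a j \<le> damping a i"
  unfolding damping_def
  by (rule divide_left_mono) (auto intro!: sum_mono2 add_pos_nonneg sum_nonneg mult_pos_pos)

lemma damping_tendsto_zero:
  assumes "\<not> summable (\<lambda>i. real_of_rat \<bar>a i\<bar>)"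
  shows "damping a \<longlonglongrightarrow> 0"
proof -
  have "filterlim (\<lambda>i. 1 + (\<Sum>j\<le>i. real_of_rat \<bar>a j\<bar>)) at_top sequentially"
    unfolding filterlim_at_top eventually_sequentially
  proof
    fix K :: real
    obtain n where n: "K < (\<Sum>j<n. real_of_rat \<bar>a j\<bar>)"
      using partial_sums_unbounded[OF _ assms] by auto
    have "K \<le> 1 + (\<Sum>j\<le>i. real_of_rat \<bar>a j\<bar>)" if "n \<le> i" for i
    proof -
      have "(\<Sum>j<n. real_of_rat \<bar>a j\<bar>) \<le> (\<Sum>j\<le>i. real_of_rat \<bar>a j\<bar>)"
        using that by (intro sum_mono2) auto
      then show ?thesis
        using n by linarith
    qed
    then show "\<exists>N. \<forall>i\<ge>N. K \<le> 1 + (\<Sum>j\<le>i. real_of_rat \<bar>a j\<bar>)"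
      by blast
  qed
  then have "(\<lambda>i. inverse (1 + (\<Sum>j\<le>i. real_of_rat \<bar>a j\<bar>))) \<longlonglongrightarrow> 0"
    by (rule tendsto_inverse_0_at_top)
  then show ?thesis
    by (simp add: damping_def[abs_def] divide_inverse)
qed

lemma damped_Scc:
  assumes "a \<in> Scc"
  shows "damped a \<in> Scc"
proof -
  have summable: "summable (\<lambda>i. real_of_rat (a i))" and not_abs: "\<not> summable (\<lambda>i. real_of_rat \<bar>a i\<bar>)"
    using assms by (simp_all add: Scc_iff)
  obtain C where "\<And>n. \<bar>\<Sum>i<n. real_of_rat (a i)\<bar> \<le> C"
    using bounded_partial_sums[OF summable] by blast
  then have "summable (\<lambda>i. real_of_rat (a i) * damping a i)"
    using damping_antimono damping_pos damping_tendsto_zero[OF not_abs]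
    by (intro summable_Dirichlet) (auto intro: less_imp_le)
  moreover have "\<bar>real_of_rat (damped a i)\<bar>
      = real_of_rat \<bar>a i\<bar> / (1 + (\<Sum>j\<le>i. real_of_rat \<bar>a j\<bar>))" for i
    using damping_pos[of a i] by (simp add: of_rat_damped abs_mult damping_def)
  then have "\<not> summable (\<lambda>i. \<bar>real_of_rat (damped a i)\<bar>)"
    using not_summable_Abel_Dini[OF _ not_abs] by simp
  ultimately show ?thesis
    by (simp add: Scc_iff of_rat_damped)
qed

lemma unbounded_if_sub_diverges_damped:
  assumes a: "a \<in> Scc" and X: "infinite X" and diverges: "sub_diverges X (damped a)"
  shows "\<not> (\<exists>M. \<forall>N. \<bar>partial_sums (masked X a) N\<bar> \<le> M)"
proof
  assume "\<exists>M. \<forall>N. \<bar>partial_sums (masked X a) N\<bar> \<le> M"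
  then obtain M where M_masked: "\<And>N. \<bar>partial_sums (masked X a) N\<bar> \<le> M"
    by blast
  have M: "\<bar>\<Sum>k<n. real_of_rat (a (enumerate X k))\<bar> \<le> M" for n
    using M_masked[of "enumerate X n"] partial_sums_masked_enumerate[OF X, of a n]
    by (simp add: partial_sums_def subseq_terms_def)
  have "(damping a \<circ> enumerate X) \<longlonglongrightarrow> 0"
    using damping_tendsto_zero a strict_mono_enumerate[OF X]
    by (intro LIMSEQ_subseq_LIMSEQ) (auto simp: Scc_iff)
  then have "summable (\<lambda>n. real_of_rat (a (enumerate X n)) * damping a (enumerate X n))"
    using M damping_pos X
    by (intro summable_Dirichlet) (auto intro: less_imp_le damping_antimono simp: o_def)
  then show False
    using diverges by (simp add: sub_diverges_def subseq_terms_def of_rat_damped)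
qed

lemma unbounded_above_masked_or_uminus:
  assumes "\<not> (\<exists>M. \<forall>N. \<bar>partial_sums (masked X a) N\<bar> \<le> M)"
  shows "\<exists>b\<in>{a, - a}. \<forall>M. \<exists>N. M \<le> partial_sums (masked X b) N"
proof (cases "\<forall>M. \<exists>N. M \<le> partial_sums (masked X a) N")
  case False
  then obtain M1 where M1: "\<And>N. partial_sums (masked X a) N < M1"
    by (auto simp: not_le)
  have "\<exists>N. M \<le> partial_sums (masked X (- a)) N" for M
  proof -
    obtain N where "max M1 M < \<bar>partial_sums (masked X a) N\<bar>"
      using assms not_le by blast
    then show ?thesis
      using M1[of N] by (intro exI[of _ N]) (auto simp: masked_uminus partial_sums_uminus)
  qed
  then show ?thesis
    by blast
qed simp

section \<open>Patching a set along blocks\<close>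

definition block_next :: "(nat \<Rightarrow> nat) \<Rightarrow> nat \<Rightarrow> nat" where
  "block_next f x = x + 1 + (\<Sum>i\<le>x. f i)"

primrec block_start :: "(nat \<Rightarrow> nat) \<Rightarrow> nat \<Rightarrow> nat" where
  "block_start f 0 = 0"
| "block_start f (Suc n) = block_next f (block_start f n)"

definition patch :: "nat set \<Rightarrow> (nat \<Rightarrow> nat) \<Rightarrow> nat set \<Rightarrow> nat set" where
  "patch X f Z = {i. \<exists>n. block_start f n \<le> i \<and> i < block_start f (Suc n)
                        \<and> (block_start f n \<in> Z \<longleftrightarrow> i \<in> X)}"

lemma block_next_mono: "x \<le> y \<Longrightarrow> block_next f x \<le> block_next f y"
  unfolding block_next_def by (intro add_mono sum_mono2) auto

lemma le_block_next: "f x \<le> block_next f x"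
  using member_le_sum[of x "{..x}" f] by (simp add: block_next_def)

lemma strict_mono_block_start: "strict_mono (block_start f)"
  by (rule strict_monoI_Suc) (simp add: block_next_def)

lemma block_start_cover: "\<exists>n. block_start f n \<le> i \<and> i < block_start f (Suc n)"
proof -
  define m where "m = (LEAST n. i < block_start f n)"
  have "i < block_start f (Suc i)"
    using strict_mono_imp_increasing[OF strict_mono_block_start[of f], of "Suc i"] by simp
  then have m: "i < block_start f m"
    unfolding m_def by (rule LeastI)
  then obtain n where n: "m = Suc n"
    by (cases m) auto
  then have "\<not> i < block_start f n"
    using not_less_Least[of n "\<lambda>k. i < block_start f k"] unfolding m_def by simp
  then show ?thesis
    using m n by (intro exI[of _ n]) simp
qed

lemma block_start_unique:
  assumes "block_start f n \<le> i" "i < block_start f (Suc n)"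
    and "block_start f m \<le> i" "i < block_start f (Suc m)"
  shows "m = n"
proof -
  have "block_start f n < block_start f (Suc m)" "block_start f m < block_start f (Suc n)"
    using assms by linarith+
  then have "n < Suc m" "m < Suc n"
    by (simp_all only: strict_mono_less[OF strict_mono_block_start])
  then show ?thesis
    by linarith
qed

lemma mem_patch_iff:
  assumes "block_start f n \<le> i" "i < block_start f (Suc n)"
  shows "i \<in> patch X f Z \<longleftrightarrow> (block_start f n \<in> Z \<longleftrightarrow> i \<in> X)"
proof
  assume "i \<in> patch X f Z"
  then obtain m where m: "block_start f m \<le> i" "i < block_start f (Suc m)"
    and "block_start f m \<in> Z \<longleftrightarrow> i \<in> X"
    unfolding patch_def by blast
  moreover have "m = n"
    using block_start_unique[OF assms m] .
  ultimately show "block_start f n \<in> Z \<longleftrightarrow> i \<in> X"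
    by simp
next
  assume "block_start f n \<in> Z \<longleftrightarrow> i \<in> X"
  then show "i \<in> patch X f Z"
    unfolding patch_def using assms by blast
qed

text \<open>A point \<open>m\<close> with \<open>g (g m) < f m\<close> lies in some block \<open>[x, y)\<close>; if that block is
  short (\<open>y < g x\<close>), the next one is long, as its right end is at least \<open>f m\<close>.\<close>

lemma frequently_long_blocks:
  assumes "mono g" and "\<not> le_star f (\<lambda>x. g (g x))"
  shows "\<exists>n\<ge>n0. g (block_start f n) \<le> block_start f (Suc n)"
proof -
  have "\<exists>m\<ge>block_start f n0. \<not> f m \<le> g (g m)"
    using assms(2) unfolding le_star_def not_eventually frequently_sequentially by blast
  then obtain m where m: "block_start f n0 \<le> m" "g (g m) < f m"
    by (auto simp: not_le)
  obtain n where n: "block_start f n \<le> m" "m < block_start f (Suc n)"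
    using block_start_cover by blast
  have "n0 \<le> n"
    using m(1) n(2) strict_mono_less[OF strict_mono_block_start[of f], of n0 "Suc n"] by simp
  show ?thesis
  proof (cases "g (block_start f n) \<le> block_start f (Suc n)")
    case True
    then show ?thesis
      using \<open>n0 \<le> n\<close> by blast
  next
    case False
    then have "block_start f (Suc n) \<le> g m"
      using monoD[OF assms(1) n(1)] by linarith
    then have "g (block_start f (Suc n)) \<le> g (g m)"
      by (rule monoD[OF assms(1)])
    also have "\<dots> \<le> block_start f (Suc (Suc n))"
      using m(2) le_block_next[of f m] block_next_mono[of m "block_start f (Suc n)" f] n(2)
      by simp
    finally show ?thesis
      using \<open>n0 \<le> n\<close> by (intro exI[of _ "Suc n"]) simp
  qed
qed

text \<open>The gain exceeds any masked sum at \<open>k\<close> by \<open>2 * C + 1\<close>, where \<open>C\<close> bounds the partial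
  sums of \<open>a\<close>: so a set agreeing with \<open>X\<close> on \<open>[k, N)\<close> has masked sum \<open>\<ge> 1\<close> at \<open>N\<close>, and
  one agreeing with \<open>- X\<close> there has masked sum \<open>\<le> -1\<close>.\<close>

definition gains_within :: "(nat \<Rightarrow> rat) \<Rightarrow> nat set \<Rightarrow> real \<Rightarrow> (nat \<Rightarrow> nat) \<Rightarrow> bool" where
  "gains_within a X C g \<longleftrightarrow> (\<forall>k. \<exists>N. k < N \<and> N < g k \<and>
     abs_partial_sums a k + 2 * C + 1 \<le> partial_sums (masked X a) N - partial_sums (masked X a) k)"

lemma exists_gains_within:
  assumes unbounded: "\<forall>M. \<exists>N. M \<le> partial_sums (masked X a) N" and "0 \<le> C"
  shows "\<exists>g. mono g \<and> gains_within a X C g"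
proof -
  define target where "target k = 3 * abs_partial_sums a k + 2 * C + 2" for k
  define L where "L k = (LEAST N. target k \<le> partial_sums (masked X a) N)" for k
  have L: "target k \<le> partial_sums (masked X a) (L k)" for k
    unfolding L_def by (rule LeastI_ex) (use unbounded in blast)
  have "mono (\<lambda>k. Suc (L k))"
  proof (rule monoI)
    fix k k' :: nat
    assume "k \<le> k'"
    then have "target k \<le> partial_sums (masked X a) (L k')"
      using L[of k'] abs_partial_sums_mono[of k k' a] by (simp add: target_def)
    then show "Suc (L k) \<le> Suc (L k')"
      unfolding L_def by (simp add: Least_le)
  qed
  moreover have "gains_within a X C (\<lambda>k. Suc (L k))"
    unfolding gains_within_def
  proof
    fix k
    have bounds: "\<bar>partial_sums (masked X a) (L k)\<bar> \<le> abs_partial_sums a (L k)"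
      "\<bar>partial_sums (masked X a) k\<bar> \<le> abs_partial_sums a k" "0 \<le> abs_partial_sums a k"
      by (simp_all add: abs_partial_sums_masked_le abs_partial_sums_nonneg)
    have "k < L k"
    proof (rule ccontr)
      assume "\<not> k < L k"
      then have "abs_partial_sums a (L k) \<le> abs_partial_sums a k"
        by (intro abs_partial_sums_mono) simp
      then show False
        using L[of k] bounds \<open>0 \<le> C\<close> unfolding target_def by linarith
    qed
    moreover have "abs_partial_sums a k + 2 * C + 1
        \<le> partial_sums (masked X a) (L k) - partial_sums (masked X a) k"
      using L[of k] bounds unfolding target_def by linarith
    ultimately show "\<exists>N. k < N \<and> N < Suc (L k) \<and> abs_partial_sums a k + 2 * C + 1
        \<le> partial_sums (masked X a) N - partial_sums (masked X a) k"
      by (intro exI[of _ "L k"]) simp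
  qed
  ultimately show ?thesis
    by blast
qed

lemma patch_swings_on_long_block:
  fixes Z :: "nat set"
  assumes C: "\<And>N. \<bar>partial_sums (\<lambda>i. real_of_rat (a i)) N\<bar> \<le> C"
    and gains: "gains_within a X C g"
    and long: "g (block_start f n) \<le> block_start f (Suc n)"
  defines "k \<equiv> block_start f n" and "Y \<equiv> patch X f Z"
  shows "\<exists>N\<ge>k. (k \<in> Z \<longrightarrow> 1 \<le> partial_sums (masked Y a) N)
             \<and> (k \<notin> Z \<longrightarrow> partial_sums (masked Y a) N \<le> -1)"
proof -
  obtain N where N: "k < N" "N < g k"
    and gain: "abs_partial_sums a k + 2 * C + 1
      \<le> partial_sums (masked X a) N - partial_sums (masked X a) k"
    using gains unfolding gains_within_def by blast
  have agree: "i \<in> Y \<longleftrightarrow> (k \<in> Z \<longleftrightarrow> i \<in> X)" if "k \<le> i" "i < N" for i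
  proof -
    have "i < block_start f (Suc n)"
      using that N long unfolding k_def by linarith
    then show ?thesis
      using mem_patch_iff[of f n i X Z] that unfolding Y_def k_def by blast
  qed
  have start: "\<bar>partial_sums (masked Y a) k\<bar> \<le> abs_partial_sums a k"
    by (rule abs_partial_sums_masked_le)
  have "0 \<le> C"
    using C[of 0] by (simp add: partial_sums_def)
  have "1 \<le> partial_sums (masked Y a) N" if "k \<in> Z"
  proof -
    have "partial_sums (masked Y a) N - partial_sums (masked Y a) k
        = partial_sums (masked X a) N - partial_sums (masked X a) k"
      by (rule partial_sums_masked_diff_cong) (use agree that N(1) in auto)
    then show ?thesis
      using gain start \<open>0 \<le> C\<close> by linarith
  qed
  moreover have "partial_sums (masked Y a) N \<le> -1" if "k \<notin> Z"
  proof -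
    have "partial_sums (masked Y a) N - partial_sums (masked Y a) k
        = partial_sums (masked (- X) a) N - partial_sums (masked (- X) a) k"
      by (rule partial_sums_masked_diff_cong) (use agree that N(1) in auto)
    then show ?thesis
      using gain start C[of N] C[of k] by (simp add: partial_sums_masked_Compl)
  qed
  ultimately show ?thesis
    using N(1) by (intro exI[of _ N]) auto
qed

lemma patch_oscillates:
  assumes C: "\<And>N. \<bar>partial_sums (\<lambda>i. real_of_rat (a i)) N\<bar> \<le> C"
    and gains: "gains_within a X C g" and "mono g"
    and not_dominated: "\<not> le_star f (\<lambda>x. g (g x))"
  obtains E where "infinite E"
    and "\<And>Z. splits Z E \<Longrightarrow>
      (\<exists>\<^sub>F N in sequentially. 1 \<le> partial_sums (masked (patch X f Z) a) N) \<and>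
      (\<exists>\<^sub>F N in sequentially. partial_sums (masked (patch X f Z) a) N \<le> -1)"
proof
  define long where "long = {n. g (block_start f n) \<le> block_start f (Suc n)}"
  have "infinite long"
    unfolding long_def infinite_nat_iff_unbounded_le
    using frequently_long_blocks[OF \<open>mono g\<close> not_dominated] by simp
  moreover have "inj_on (block_start f) long"
    by (rule strict_mono_imp_inj_on[OF strict_mono_block_start])
  ultimately show "infinite (block_start f ` long)"
    using finite_imageD by blast
  fix Z
  assume Z: "splits Z (block_start f ` long)"
  have swing: "\<exists>N\<ge>e. (e \<in> Z \<longrightarrow> 1 \<le> partial_sums (masked (patch X f Z) a) N)
      \<and> (e \<notin> Z \<longrightarrow> partial_sums (masked (patch X f Z) a) N \<le> -1)"
    if "e \<in> block_start f ` long" for e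
    using that patch_swings_on_long_block[OF C gains] unfolding long_def by blast
  show "(\<exists>\<^sub>F N in sequentially. 1 \<le> partial_sums (masked (patch X f Z) a) N) \<and>
      (\<exists>\<^sub>F N in sequentially. partial_sums (masked (patch X f Z) a) N \<le> -1)"
  proof
    show "\<exists>\<^sub>F N in sequentially. 1 \<le> partial_sums (masked (patch X f Z) a) N"
      using Z swing unfolding splits_def
      by (intro frequently_sequentially_if_infinite[of "Z \<inter> block_start f ` long"]) auto
    show "\<exists>\<^sub>F N in sequentially. partial_sums (masked (patch X f Z) a) N \<le> -1"
      using Z swing unfolding splits_def
      by (intro frequently_sequentially_if_infinite[of "block_start f ` long - Z"]) auto
  qed
qed

definition osc_splitting_set :: "(nat \<Rightarrow> rat) \<Rightarrow> nat set \<Rightarrow> (nat \<Rightarrow> nat) \<Rightarrow> nat set \<Rightarrow> bool" where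
  "osc_splitting_set a X f E \<longleftrightarrow> infinite E \<and>
     (\<forall>Z. splits Z E \<longrightarrow> patch X f Z \<in> infcoinf \<and> sub_osc (patch X f Z) a)"

lemma exists_osc_splitting_sets:
  assumes a: "a \<in> Scc" and X: "infinite X" and diverges: "sub_diverges X (damped a)"
  shows "\<exists>h. \<forall>f. \<not> le_star f h \<longrightarrow> (\<exists>E. osc_splitting_set a X f E)"
proof -
  obtain b where b: "b \<in> {a, - a}" and up: "\<forall>M. \<exists>N. M \<le> partial_sums (masked X b) N"
    using unbounded_above_masked_or_uminus[OF unbounded_if_sub_diverges_damped[OF assms]] by blast
  have "summable (\<lambda>i. real_of_rat (b i))"
    using a b uminus_Scc by (auto simp: Scc_iff)
  then obtain C where C: "\<And>N. \<bar>partial_sums (\<lambda>i. real_of_rat (b i)) N\<bar> \<le> C"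
    unfolding partial_sums_def using bounded_partial_sums by blast
  have "0 \<le> C"
    using C[of 0] by (simp add: partial_sums_def)
  obtain g where g: "mono g" "gains_within b X C g"
    using exists_gains_within[OF up \<open>0 \<le> C\<close>] by blast
  have "\<exists>E. osc_splitting_set a X f E" if not_dominated: "\<not> le_star f (\<lambda>x. g (g x))" for f
  proof -
    obtain E where "infinite E" and osc: "\<And>Z. splits Z E \<Longrightarrow>
        (\<exists>\<^sub>F N in sequentially. 1 \<le> partial_sums (masked (patch X f Z) b) N) \<and>
        (\<exists>\<^sub>F N in sequentially. partial_sums (masked (patch X f Z) b) N \<le> -1)"
      using patch_oscillates[OF C g(2,1) not_dominated] by blast
    have "patch X f Z \<in> infcoinf \<and> sub_osc (patch X f Z) a" if "splits Z E" for Z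
    proof (rule oscillating_masked_sums_imp_sub_osc)
      show "summable (\<lambda>i. real_of_rat (a i))"
        using a by (simp add: Scc_iff)
      show "\<exists>\<^sub>F N in sequentially. 1 \<le> partial_sums (masked (patch X f Z) a) N"
        and "\<exists>\<^sub>F N in sequentially. partial_sums (masked (patch X f Z) a) N \<le> -1"
        using osc[OF that] b by (auto simp: masked_uminus partial_sums_uminus)
    qed
    then show ?thesis
      using \<open>infinite E\<close> unfolding osc_splitting_set_def by blast
  qed
  then show ?thesis
    by blast
qed

lemma patch_family_oscillates:
  assumes "\<X> \<subseteq> infcoinf" and diverges: "\<forall>a\<in>Scc. \<exists>X\<in>\<X>. sub_diverges X a"
    and unbounded: "\<not> (\<exists>g. \<forall>f\<in>F. le_star f g)"
  shows "\<forall>a\<in>Scc. \<exists>Y\<in>(\<lambda>(X, f, Z). patch X f Z) ` (\<X> \<times> F \<times> \<X>) \<inter> infcoinf. sub_osc Y a"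
proof
  fix a
  assume a: "a \<in> Scc"
  obtain X where X: "X \<in> \<X>" "sub_diverges X (damped a)"
    using diverges damped_Scc[OF a] by blast
  moreover have "infinite X"
    using assms(1) X(1) by (auto simp: infcoinf_def)
  ultimately obtain h where h: "\<And>f. \<not> le_star f h \<Longrightarrow> \<exists>E. osc_splitting_set a X f E"
    using exists_osc_splitting_sets[OF a] by blast
  obtain f where f: "f \<in> F" "\<not> le_star f h"
    using unbounded by blast
  then obtain E where E: "osc_splitting_set a X f E"
    using h by blast
  then have "spread E alt_harmonic \<in> Scc"
    by (simp add: osc_splitting_set_def spread_alt_harmonic_Scc)
  then obtain Z where Z: "Z \<in> \<X>" "sub_diverges Z (spread E alt_harmonic)"
    using diverges by blast
  then have "splits Z E"
    using assms(1) summable_alt_harmonic splits_if_sub_diverges_spread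
    by (auto simp: infcoinf_def)
  then have "patch X f Z \<in> infcoinf \<and> sub_osc (patch X f Z) a"
    using E by (simp add: osc_splitting_set_def)
  then show "\<exists>Y\<in>(\<lambda>(X, f, Z). patch X f Z) ` (\<X> \<times> F \<times> \<X>) \<inter> infcoinf. sub_osc Y a"
    using X(1) f(1) Z(1) by force
qed

lemma common_oscillation:
  fixes A :: "(nat \<Rightarrow> rat) set"
  assumes A: "A \<subseteq> Scc" "A \<noteq> {}"
    and diverges: "\<And>B. B \<subseteq> Scc \<Longrightarrow> |B| \<le>o |A| \<Longrightarrow> \<exists>X\<in>infcoinf. \<forall>b\<in>B. sub_diverges X b"
    and undominated: "\<And>H :: (nat \<Rightarrow> nat) set. |H| \<le>o |A| \<Longrightarrow> \<exists>f. \<forall>h\<in>H. \<not> le_star f h"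
  shows "\<exists>Y\<in>infcoinf. \<forall>a\<in>A. sub_osc Y a"
proof -
  obtain X where X: "X \<in> infcoinf" "\<And>a. a \<in> A \<Longrightarrow> sub_diverges X (damped a)"
    using diverges[of "damped ` A"] A(1) damped_Scc card_of_image by force
  have "\<forall>a\<in>A. \<exists>h. \<forall>f. \<not> le_star f h \<longrightarrow> (\<exists>E. osc_splitting_set a X f E)"
    using exists_osc_splitting_sets X A(1) by (auto simp: infcoinf_def)
  then obtain h where h: "\<And>a f. a \<in> A \<Longrightarrow> \<not> le_star f (h a) \<Longrightarrow> \<exists>E. osc_splitting_set a X f E"
    by metis
  obtain f where "\<And>a. a \<in> A \<Longrightarrow> \<not> le_star f (h a)"
    using undominated[of "h ` A"] card_of_image by blast
  then have "\<forall>a\<in>A. \<exists>E. osc_splitting_set a X f E"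
    using h by blast
  then obtain E where E: "\<And>a. a \<in> A \<Longrightarrow> osc_splitting_set a X f (E a)"
    by metis
  obtain Z where Z: "Z \<in> infcoinf" "\<And>a. a \<in> A \<Longrightarrow> sub_diverges Z (spread (E a) alt_harmonic)"
    using diverges[of "(\<lambda>a. spread (E a) alt_harmonic) ` A"] E card_of_image
      spread_alt_harmonic_Scc by (force simp: osc_splitting_set_def)
  have "patch X f Z \<in> infcoinf \<and> sub_osc (patch X f Z) a" if "a \<in> A" for a
  proof -
    have "splits Z (E a)"
      using Z that summable_alt_harmonic splits_if_sub_diverges_spread
      by (auto simp: infcoinf_def)
    then show ?thesis
      using E[OF that] by (simp add: osc_splitting_set_def)
  qed
  then show ?thesis
    using A(2) by blast
qed

section \<open>Cardinal characteristics\<close>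

lemma mincard_spec:
  assumes "P A"
  obtains B where "P B" "mincard P = |B|" "\<And>C. P C \<Longrightarrow> |B| \<le>o |C|"
proof -
  have "card_of ` Collect P \<noteq> {}" "\<forall>r \<in> card_of ` Collect P. Well_order r"
    using assms card_of_Well_order by auto
  then obtain B where "P B" "\<forall>C\<in>Collect P. |B| \<le>o |C|"
    using exists_minim_Well_order[of "card_of ` Collect P"] by blast
  then have "\<exists>r B. P B \<and> r = |B| \<and> (\<forall>C. P C \<longrightarrow> (card_of B, card_of C) \<in> ordLeq)"
    by blast
  then have "\<exists>B. P B \<and> mincard P = |B| \<and> (\<forall>C. P C \<longrightarrow> (card_of B, card_of C) \<in> ordLeq)"
    unfolding mincard_def by (rule someI_ex)
  then show ?thesis
    using that by blast
qed

lemma mincard_eq_card_of: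
  assumes "P A"
  obtains B where "P B" "mincard P = |B|"
  by (rule mincard_spec[of P A, OF assms]) (rule that)

lemma mincard_ordLeq:
  assumes "P A"
  shows "mincard P \<le>o |A|"
proof -
  obtain B where "mincard P = |B|" "\<And>C. P C \<Longrightarrow> |B| \<le>o |C|"
    by (rule mincard_spec[of P A, OF assms]) (rule that)
  then show ?thesis
    using assms by simp
qed

lemma not_if_ordLess_mincard: "|B| <o mincard P \<Longrightarrow> \<not> P B"
  using mincard_ordLeq[of P B] not_ordLess_ordLeq by blast

lemma mincard_mono:
  assumes "Q A" and "\<And>B. Q B \<Longrightarrow> P B"
  shows "mincard P \<le>o mincard Q"
proof -
  obtain B where "Q B" "mincard Q = |B|"
    by (rule mincard_eq_card_of[of Q A, OF assms(1)]) (rule that)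
  then show ?thesis
    using mincard_ordLeq[of P B] assms(2) by simp
qed

lemma card_of_image_Times_Times_ordLeq:
  assumes "infinite A" and "B \<noteq> {}" and "|B| \<le>o |A|"
  shows "|h ` (A \<times> B \<times> A)| \<le>o |A|"
proof -
  have "|B \<times> A| \<le>o |A|"
    using card_of_Times_infinite[OF assms] ordIso_imp_ordLeq by blast
  moreover have "B \<times> A \<noteq> {}"
    using assms(1,2) by auto
  ultimately have "|A \<times> B \<times> A| =o |A|"
    using card_of_Times_infinite[OF assms(1), of "B \<times> A"] by simp
  then show ?thesis
    using card_of_image[of h "A \<times> B \<times> A"] by (rule ordLeq_ordIso_trans[rotated])
qed

lemma infcoinf_nonempty: "infcoinf \<noteq> {}"
proof -
  have "\<exists>n\<ge>m. even n" "\<exists>n\<ge>m. odd n" for m :: nat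
    by (rule exI[of _ "2 * m"]; simp) (rule exI[of _ "2 * m + 1"]; simp)
  then have "infinite {n::nat. even n}" "infinite (- {n::nat. even n})"
    unfolding infinite_nat_iff_unbounded_le by auto
  then show ?thesis
    by (auto simp: infcoinf_def)
qed

lemma infinite_if_unbounded:
  assumes "\<not> (\<exists>g. \<forall>f\<in>F. le_star f g)"
  shows "infinite F"
proof
  assume "finite F"
  then have "\<forall>f\<in>F. le_star f (\<lambda>n. \<Sum>h\<in>F. h n)"
    unfolding le_star_def by (auto intro!: always_eventually member_le_sum)
  then show False
    using assms by blast
qed

lemma UNIV_unbounded: "\<not> (\<exists>g. \<forall>f\<in>UNIV. le_star f g)"
proof
  assume "\<exists>g. \<forall>f\<in>UNIV. le_star f g"
  then obtain g where "le_star (\<lambda>n. Suc (g n)) g"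
    by blast
  then show False
    by (simp add: le_star_def)
qed

lemma ss_io_ordIso_ss_o:
  assumes "bnum \<le>o ss_io"
  shows "ss_io =o ss_o"
proof -
  let ?P_io = "\<lambda>\<X>. \<X> \<subseteq> infcoinf \<and> (\<forall>a\<in>Scc. \<exists>X\<in>\<X>. sub_diverges X a)"
  let ?P_o = "\<lambda>\<X>. \<X> \<subseteq> infcoinf \<and> (\<forall>a\<in>Scc. \<exists>X\<in>\<X>. sub_osc X a)"
  let ?P_b = "\<lambda>F :: (nat \<Rightarrow> nat) set. \<not> (\<exists>g. \<forall>f\<in>F. le_star f g)"
  have "?P_io infcoinf"
  proof (intro conjI ballI subset_refl)
    fix a
    assume "a \<in> Scc"
    then show "\<exists>X\<in>infcoinf. sub_diverges X a"
      using positive_part_sub_diverges by blast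
  qed
  then obtain \<X> where \<X>: "?P_io \<X>" "ss_io = |\<X>|"
    by (rule mincard_eq_card_of[of ?P_io]) (rule that, simp_all add: ss_io_def)
  obtain F where F: "?P_b F" "bnum = |F|"
    by (rule mincard_eq_card_of[of ?P_b, OF UNIV_unbounded]) (rule that, simp_all add: bnum_def)
  define \<Y> where "\<Y> = (\<lambda>(X, f, Z). patch X f Z) ` (\<X> \<times> F \<times> \<X>) \<inter> infcoinf"
  have "?P_o \<Y>"
    unfolding \<Y>_def using patch_family_oscillates[of \<X> F] \<X>(1) F(1) by simp
  have "infinite F"
    using F(1) by (rule infinite_if_unbounded)
  moreover have "|F| \<le>o |\<X>|"
    using assms \<X>(2) F(2) by simp
  moreover have "infinite \<X>"
    using card_of_ordLeq_finite[OF \<open>|F| \<le>o |\<X>|\<close>] \<open>infinite F\<close> by blast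
  ultimately have "|(\<lambda>(X, f, Z). patch X f Z) ` (\<X> \<times> F \<times> \<X>)| \<le>o |\<X>|"
    by (intro card_of_image_Times_Times_ordLeq) auto
  then have "|\<Y>| \<le>o |\<X>|"
    unfolding \<Y>_def using card_of_mono1[OF Int_lower1] by (rule ordLeq_transitive[rotated])
  then have "ss_o \<le>o ss_io"
    unfolding ss_o_def \<X>(2) using mincard_ordLeq[of ?P_o, OF \<open>?P_o \<Y>\<close>] by (rule ordLeq_transitive[rotated])
  moreover have "ss_io \<le>o ss_o"
    unfolding ss_io_def ss_o_def
    by (rule mincard_mono[of ?P_o \<Y> ?P_io, OF \<open>?P_o \<Y>\<close>]) (use sub_osc_imp_sub_diverges in blast)
  ultimately show ?thesis
    by (simp add: ordIso_iff_ordLeq)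
qed

lemma ss_io_perp_ordIso_ss_o_perp:
  assumes "ss_io_perp \<le>o dnum"
  shows "ss_io_perp =o ss_o_perp"
proof -
  let ?P_io = "\<lambda>\<A>. \<A> \<subseteq> Scc \<and> \<not> (\<exists>X\<in>infcoinf. \<forall>a\<in>\<A>. sub_diverges X a)"
  let ?P_o = "\<lambda>\<A>. \<A> \<subseteq> Scc \<and> \<not> (\<exists>X\<in>infcoinf. \<forall>a\<in>\<A>. sub_osc X a)"
  have "?P_io Scc"
    using exists_Scc_not_sub_diverges by blast
  have io_imp_o: "?P_o \<A>" if "?P_io \<A>" for \<A>
    using that sub_osc_imp_sub_diverges by blast
  obtain \<A>\<^sub>i\<^sub>o where "ss_io_perp = |\<A>\<^sub>i\<^sub>o|"
    by (rule mincard_eq_card_of[of ?P_io, OF \<open>?P_io Scc\<close>]) (rule that, simp add: ss_io_perp_def)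
  obtain \<A> where \<A>: "?P_o \<A>" "ss_o_perp = |\<A>|"
    by (rule mincard_eq_card_of[of ?P_o, OF io_imp_o[OF \<open>?P_io Scc\<close>]])
      (rule that, simp_all add: ss_o_perp_def)
  have "ss_o_perp \<le>o ss_io_perp"
    unfolding ss_o_perp_def ss_io_perp_def
    by (rule mincard_mono[of ?P_io Scc ?P_o, OF \<open>?P_io Scc\<close> io_imp_o])
  moreover have "ss_io_perp \<le>o ss_o_perp"
  proof (rule ccontr)
    assume "\<not> ss_io_perp \<le>o ss_o_perp"
    then have small: "|\<A>| <o ss_io_perp"
      unfolding \<A>(2) \<open>ss_io_perp = |\<A>\<^sub>i\<^sub>o|\<close>
      by (simp add: not_ordLeq_iff_ordLess[OF card_of_Well_order card_of_Well_order])
    have "\<exists>Y\<in>infcoinf. \<forall>a\<in>\<A>. sub_osc Y a"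
    proof (rule common_oscillation)
      show "\<A> \<subseteq> Scc" "\<A> \<noteq> {}"
        using \<A>(1) infcoinf_nonempty by blast+
      show "\<exists>X\<in>infcoinf. \<forall>b\<in>B. sub_diverges X b" if "B \<subseteq> Scc" "|B| \<le>o |\<A>|" for B
        using not_if_ordLess_mincard[OF ordLeq_ordLess_trans[OF that(2) small[unfolded ss_io_perp_def]]]
          that(1) by blast
      show "\<exists>f. \<forall>h\<in>H. \<not> le_star f h" if "|H| \<le>o |\<A>|" for H :: "(nat \<Rightarrow> nat) set"
        using not_if_ordLess_mincard[OF ordLess_ordLeq_trans[OF ordLeq_ordLess_trans[OF that small]
          assms[unfolded dnum_def]]] by blast
    qed
    then show False
      using \<A>(1) by blast
  qed
  ultimately show ?thesis
    by (simp add: ordIso_iff_ordLeq)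
qed

theorem mainTheorem17:
  shows "((bnum, ss_io) \<in> ordLeq \<longrightarrow> (ss_io, ss_o) \<in> ordIso)
       \<and> ((ss_io_perp, dnum) \<in> ordLeq \<longrightarrow> (ss_io_perp, ss_o_perp) \<in> ordIso)"
  using ss_io_ordIso_ss_o ss_io_perp_ordIso_ss_o_perp by blast

end
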